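(* (i) For every $n\ge0$ and $i\in\{0,1\}$, $\hat\epsilon_n(x,i)=v_n(x,i)-\hat v_n(x,i)$ is nondecreasing in $x$ (equivalently $\Delta_n(x,i)\le\hat\Delta_n(x,i)$ for all $x\ge0$). (ii) For every $n\ge 1$, $\hat B^d_n\le B^d_n$.
   Context: Parameters: $\lambda>0$, $0<\mu_l<\mu_h$, $\delta=\mu_h-\mu_l$, $R\ge 0$, $c>0$, and $h:\{0,1,2,\dots\}\to\mathbb{R}$ nondecreasing and convex with $h(0)=0$; the rates are normalized so that $\lambda+\mu_h+\beta=1$ for a discount rate $\beta>0$. Combined (admission + service-rate control) finite-horizon value functions on $S=\{0,1,2,\dots\}\times\{0,1\}$: $v_0\equiv 0$ and for $n\ge 0$: $v_{n+1}(0,0)=\lambda v_n(0,1)+\mu_h v_n(0,0)$; $v_{n+1}(x,0)=-h(x)+\lambda v_n(x,1)+\mu_l v_n(x-1,0)+\max\{\delta v_n(x,0),-c+\delta v_n(x-1,0)\}$ for $x\ge1$; $v_{n+1}(x,1)=\max\{R+v_{n+1}(x+1,0),v_{n+1}(x,0)\}$ for $x\ge 0$. Admission control subproblem (service rate always $\mu_l$): $\hat v_0\equiv0$ and for $n\ge0$: $\hat v_{n+1}(0,0)=\lambda\hat v_n(0,1)+\mu_h\hat v_n(0,0)$; $\hat v_{n+1}(x,0)=-h(x)+\lambda\hat v_n(x,1)+\mu_l\hat v_n(x-1,0)+\delta\hat v_n(x,0)$ for $x\ge1$; $\hat v_{n+1}(x,1)=\max\{R+\hat v_{n+1}(x+1,0),\hat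 v_{n+1}(x,0)\}$ for $x\ge0$. $\Delta_n(x,i)=v_n(x,i)-v_n(x+1,i)$, $\hat\Delta_n(x,i)=\hat v_n(x,i)-\hat v_n(x+1,i)$. Threshold function: $T_f(\theta)=\sup\{k\ge0:f(k)\le\theta\}$ with $\sup\emptyset=-1$ ($+\infty$ allowed). Admission thresholds: $B^d_n=T_{\Delta_n(\cdot,0)}(R)$ and $\hat B^d_n=T_{\hat\Delta_n(\cdot,0)}(R)$. *)

theory Defs
  imports "HOL-Library.Extended_Real"
begin

text \<open>States (x,i) with x :: nat and i :: nat, i \<in> {0,1}.
  A value function is represented as a function V x i.
  One step of the combined (admission + service-rate) recursion:\<close>

definition vstep :: "real \<Rightarrow> real \<Rightarrow> real \<Rightarrow> real \<Rightarrow> real \<Rightarrow> (nat \<Rightarrow> real)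
     \<Rightarrow> (nat \<Rightarrow> nat \<Rightarrow> real) \<Rightarrow> (nat \<Rightarrow> nat \<Rightarrow> real)" where
  "vstep lam mul muh R c h V =
     (let W = (\<lambda>x. if x = 0 then lam * V 0 1 + muh * V 0 0
                   else - h x + lam * V x 1 + mul * V (x - 1) 0
                        + max ((muh - mul) * V x 0) (- c + (muh - mul) * V (x - 1) 0))
      in (\<lambda>x i. if i = 0 then W x else max (R + W (x + 1)) (W x)))"

text \<open>One step of the admission-control subproblem (service rate always mu_l).\<close>

definition vhstep :: "real \<Rightarrow> real \<Rightarrow> real \<Rightarrow> real \<Rightarrow> (nat \<Rightarrow> real)
     \<Rightarrow> (nat \<Rightarrow> nat \<Rightarrow> real) \<Rightarrow> (nat \<Rightarrow> nat \<Rightarrow> real)" where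
  "vhstep lam mul muh R h V =
     (let W = (\<lambda>x. if x = 0 then lam * V 0 1 + muh * V 0 0
                   else - h x + lam * V x 1 + mul * V (x - 1) 0 + (muh - mul) * V x 0)
      in (\<lambda>x i. if i = 0 then W x else max (R + W (x + 1)) (W x)))"

definition vfun :: "real \<Rightarrow> real \<Rightarrow> real \<Rightarrow> real \<Rightarrow> real \<Rightarrow> (nat \<Rightarrow> real)
     \<Rightarrow> nat \<Rightarrow> nat \<Rightarrow> nat \<Rightarrow> real" where
  "vfun lam mul muh R c h n = (vstep lam mul muh R c h ^^ n) (\<lambda>_ _. 0)"

definition vhfun :: "real \<Rightarrow> real \<Rightarrow> real \<Rightarrow> real \<Rightarrow> (nat \<Rightarrow> real)
     \<Rightarrow> nat \<Rightarrow> nat \<Rightarrow> nat \<Rightarrow> real" where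
  "vhfun lam mul muh R h n = (vhstep lam mul muh R h ^^ n) (\<lambda>_ _. 0)"

text \<open>Threshold function T_f(theta) = sup {k \<ge> 0. f k \<le> theta}, sup of empty set = -1,
  value +infinity allowed.\<close>

definition thresh :: "(nat \<Rightarrow> real) \<Rightarrow> real \<Rightarrow> ereal" where
  "thresh f \<theta> = (if {k. f k \<le> \<theta>} = {} then -1
                   else (SUP k\<in>{k. f k \<le> \<theta>}. ereal (real k)))"

end

theory Submission
  imports Defs
begin

text \<open>
  Write \<open>\<Delta>f x = f x - f (x + 1)\<close> for the first difference, as in \<open>\<Delta>\<^sub>n\<close>.
  Both value iterations factor as a "pre-admission" step \<open>W\<close> (the \<open>i = 0\<close> component),
  followed by the admission operator \<open>admit R W x = max (R + W (x + 1)) (W x)\<close> for \<open>i = 1\<close>.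
  By induction on the horizon \<open>n\<close> we prove the invariant
    (a) every \<open>\<hat>v\<^sub>n(\<cdot>, i)\<close> is nonincreasing and concave (\<open>0 \<le> \<Delta>\<close>, \<open>\<Delta>\<close> nondecreasing), and
    (b) \<open>\<Delta>v\<^sub>n(\<cdot>, i) \<le> \<Delta>\<hat>v\<^sub>n(\<cdot>, i)\<close> pointwise.
  The admission operator preserves (a) and is monotone in \<open>\<Delta>\<close>, so it suffices to treat
  the pre-admission steps: (a) follows from monotonicity and convexity of the holding cost,
  and (b) from (a): both branches of the service-rate decision have differences bounded
  by \<open>(\<mu>\<^sub>h - \<mu>\<^sub>l) \<Delta>\<hat>v(x + 1, 0)\<close>, the second one thanks to concavity of \<open>\<hat>v(\<cdot>, 0)\<close>.  Part (i) of the theorem is (b) restated as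
  monotonicity of \<open>v\<^sub>n - \<hat>v\<^sub>n\<close>; part (ii) follows from (b) because the threshold
  \<open>T\<^sub>f(\<theta>)\<close> is antitone in \<open>f\<close>.
\<close>

definition fdiff :: "(nat \<Rightarrow> real) \<Rightarrow> nat \<Rightarrow> real" where
  "fdiff f x = f x - f (Suc x)"

definition noninc_concave :: "(nat \<Rightarrow> real) \<Rightarrow> bool" where
  "noninc_concave f \<longleftrightarrow> (\<forall>x. 0 \<le> fdiff f x \<and> fdiff f x \<le> fdiff f (Suc x))"

definition admit :: "real \<Rightarrow> (nat \<Rightarrow> real) \<Rightarrow> nat \<Rightarrow> real" where
  "admit R W x = max (R + W (Suc x)) (W x)"

lemma fdiff_admit:
  "fdiff (admit R W) x = max R (fdiff W x) + min (fdiff W (Suc x) - R) 0"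
  by (auto simp: fdiff_def admit_def max_def min_def)

lemma admit_noninc_concave:
  assumes "noninc_concave W"
  shows "noninc_concave (admit R W)"
  unfolding noninc_concave_def
proof
  fix x
  have "0 \<le> fdiff W x" "fdiff W x \<le> fdiff W (Suc x)" "fdiff W (Suc x) \<le> fdiff W (Suc (Suc x))"
    using assms by (auto simp: noninc_concave_def)
  then show "0 \<le> fdiff (admit R W) x \<and> fdiff (admit R W) x \<le> fdiff (admit R W) (Suc x)"
    unfolding fdiff_admit by (auto simp: max_def min_def)
qed

lemma admit_fdiff_mono:
  assumes "\<And>x. fdiff W x \<le> fdiff W' x"
  shows "fdiff (admit R W) x \<le> fdiff (admit R W') x"
  unfolding fdiff_admit using assms[of x] assms[of "Suc x"] by linarith

lemma vstep_admit:
  "(\<lambda>x. vstep lam mul muh R c h V x 1) = admit R (\<lambda>x. vstep lam mul muh R c h V x 0)"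
  by (simp add: fun_eq_iff vstep_def admit_def Let_def)

lemma vhstep_admit:
  "(\<lambda>x. vhstep lam mul muh R h V x 1) = admit R (\<lambda>x. vhstep lam mul muh R h V x 0)"
  by (simp add: fun_eq_iff vhstep_def admit_def Let_def)

lemma fdiff_vhstep_0:
  "fdiff (\<lambda>x. vhstep lam mul muh R h V x 0) 0
     = h 1 + lam * fdiff (\<lambda>x. V x 1) 0 + (muh - mul) * fdiff (\<lambda>x. V x 0) 0"
  by (simp add: fdiff_def vhstep_def Let_def algebra_simps)

lemma fdiff_vhstep_Suc:
  "fdiff (\<lambda>x. vhstep lam mul muh R h V x 0) (Suc y)
     = (h (Suc (Suc y)) - h (Suc y)) + lam * fdiff (\<lambda>x. V x 1) (Suc y)
       + mul * fdiff (\<lambda>x. V x 0) y + (muh - mul) * fdiff (\<lambda>x. V x 0) (Suc y)"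
  by (simp add: fdiff_def vhstep_def Let_def algebra_simps)

text \<open>Differences of the pre-admission step of the combined problem.  At the boundary the
  service-rate decision at state 1 only helps (bound); inside it contributes a difference
  of two maxima.\<close>
lemma fdiff_vstep_0:
  "fdiff (\<lambda>x. vstep lam mul muh R c h V x 0) 0
     \<le> h 1 + lam * fdiff (\<lambda>x. V x 1) 0 + (muh - mul) * fdiff (\<lambda>x. V x 0) 0"
proof -
  have "(muh - mul) * V 1 0 \<le> max ((muh - mul) * V 1 0) (- c + (muh - mul) * V 0 0)"
    by simp
  then show ?thesis by (simp add: fdiff_def vstep_def Let_def algebra_simps)
qed

lemma fdiff_vstep_Suc:
  "fdiff (\<lambda>x. vstep lam mul muh R c h V x 0) (Suc y)
     = (h (Suc (Suc y)) - h (Suc y)) + lam * fdiff (\<lambda>x. V x 1) (Suc y)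
       + mul * fdiff (\<lambda>x. V x 0) y
       + (max ((muh - mul) * V (Suc y) 0) (- c + (muh - mul) * V y 0)
          - max ((muh - mul) * V (Suc (Suc y)) 0) (- c + (muh - mul) * V (Suc y) 0))"
  by (simp add: fdiff_def vstep_def Let_def algebra_simps)

lemma vhstep_noninc_concave:
  assumes lam: "lam \<ge> 0" and mul: "mul \<ge> 0" and muh: "mul \<le> muh"
    and h_mono: "mono h" and h_convex: "\<And>x. h (x + 1) - h x \<le> h (x + 2) - h (x + 1)"
    and h0: "h 0 = 0"
    and V0: "noninc_concave (\<lambda>x. V x 0)" and V1: "noninc_concave (\<lambda>x. V x 1)"
  shows "noninc_concave (\<lambda>x. vhstep lam mul muh R h V x 0)"
proof -
  let ?W = "\<lambda>x. vhstep lam mul muh R h V x 0"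
  let ?D0 = "fdiff (\<lambda>x. V x 0)" and ?D1 = "fdiff (\<lambda>x. V x 1)"
  have d: "0 \<le> muh - mul" using muh by simp
  have D0: "0 \<le> ?D0 x" "?D0 x \<le> ?D0 (Suc x)" for x using V0 by (auto simp: noninc_concave_def)
  have D1: "0 \<le> ?D1 x" "?D1 x \<le> ?D1 (Suc x)" for x using V1 by (auto simp: noninc_concave_def)
  have h_step: "0 \<le> h (Suc x) - h x" for x
    using h_mono by (simp add: mono_def)
  have h_step_mono: "h (Suc x) - h x \<le> h (Suc (Suc x)) - h (Suc x)" for x
    using h_convex[of x] by (simp add: numeral_2_eq_2)
  have nonneg: "0 \<le> fdiff ?W x" for x
  proof (cases x)
    case 0
    then show ?thesis
      using h_step[of 0] h0 D0 D1 lam d by (simp add: fdiff_vhstep_0)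
  next
    case (Suc y)
    then show ?thesis
      using h_step[of "Suc y"] D0 D1 lam mul d by (simp add: fdiff_vhstep_Suc)
  qed
  have incr: "fdiff ?W x \<le> fdiff ?W (Suc x)" for x
  proof (cases x)
    case 0
    have "lam * ?D1 0 \<le> lam * ?D1 1" "(muh - mul) * ?D0 0 \<le> (muh - mul) * ?D0 1"
      using lam d D0 D1 by (auto intro: mult_left_mono)
    then show ?thesis
      using 0 h_step_mono[of 0] h0 mult_nonneg_nonneg[OF mul D0(1)[of 0]]
      by (simp add: fdiff_vhstep_0 fdiff_vhstep_Suc)
  next
    case (Suc y)
    have "lam * ?D1 (Suc y) \<le> lam * ?D1 (Suc (Suc y))" "mul * ?D0 y \<le> mul * ?D0 (Suc y)"
      "(muh - mul) * ?D0 (Suc y) \<le> (muh - mul) * ?D0 (Suc (Suc y))"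
      using lam mul d D0 D1 by (auto intro: mult_left_mono)
    then show ?thesis
      using Suc h_step_mono[of "Suc y"] by (simp add: fdiff_vhstep_Suc)
  qed
  show ?thesis using nonneg incr by (simp add: noninc_concave_def)
qed

text \<open>Concavity controls the branch where the high rate is chosen.\<close>
lemma vstep_fdiff_le_vhstep:
  assumes lam: "lam \<ge> 0" and mul: "mul \<ge> 0" and muh: "mul \<le> muh"
    and Vh0_concave: "\<And>x. fdiff (\<lambda>x. Vh x 0) x \<le> fdiff (\<lambda>x. Vh x 0) (Suc x)"
    and le0: "\<And>x. fdiff (\<lambda>x. V x 0) x \<le> fdiff (\<lambda>x. Vh x 0) x"
    and le1: "\<And>x. fdiff (\<lambda>x. V x 1) x \<le> fdiff (\<lambda>x. Vh x 1) x"
  shows "fdiff (\<lambda>x. vstep lam mul muh R c h V x 0) x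
       \<le> fdiff (\<lambda>x. vhstep lam mul muh R h Vh x 0) x"
proof -
  let ?D0 = "fdiff (\<lambda>x. V x 0)" and ?D1 = "fdiff (\<lambda>x. V x 1)"
  let ?E0 = "fdiff (\<lambda>x. Vh x 0)" and ?E1 = "fdiff (\<lambda>x. Vh x 1)"
  have d: "0 \<le> muh - mul" using muh by simp
  have lam_le: "lam * ?D1 y \<le> lam * ?E1 y" for y
    using le1 lam by (rule mult_left_mono)
  have d_le: "(muh - mul) * ?D0 y \<le> (muh - mul) * ?E0 y" for y
    using le0 d by (rule mult_left_mono)
  show ?thesis
  proof (cases x)
    case 0
    then show ?thesis
      using fdiff_vstep_0[of lam mul muh R c h V] lam_le[of 0] d_le[of 0] by (simp add: fdiff_vhstep_0)
  next
    case (Suc y)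
    have "(muh - mul) * ?D0 y \<le> (muh - mul) * ?E0 (Suc y)"
      using d le0[of y] Vh0_concave[of y] by (auto intro: mult_left_mono)
    then have rate: "max ((muh - mul) * V (Suc y) 0) (- c + (muh - mul) * V y 0)
          - max ((muh - mul) * V (Suc (Suc y)) 0) (- c + (muh - mul) * V (Suc y) 0)
        \<le> (muh - mul) * ?E0 (Suc y)"
      using d_le[of "Suc y"] by (simp add: fdiff_def algebra_simps)
    have "mul * ?D0 y \<le> mul * ?E0 y" using le0 mul by (rule mult_left_mono)
    then show ?thesis
      using Suc rate lam_le[of "Suc y"] by (simp add: fdiff_vstep_Suc fdiff_vhstep_Suc)
  qed
qed

definition comparison_invariant :: "(nat \<Rightarrow> nat \<Rightarrow> real) \<Rightarrow> (nat \<Rightarrow> nat \<Rightarrow> real) \<Rightarrow> bool" where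
  "comparison_invariant V Vh \<longleftrightarrow>
     (\<forall>i\<in>{0, 1}. noninc_concave (\<lambda>x. Vh x i)
        \<and> (\<forall>x. fdiff (\<lambda>x. V x i) x \<le> fdiff (\<lambda>x. Vh x i) x))"

lemma step_preserves_comparison_invariant:
  assumes lam: "lam \<ge> 0" and mul: "mul \<ge> 0" and muh: "mul \<le> muh"
    and h_mono: "mono h" and h_convex: "\<And>x. h (x + 1) - h x \<le> h (x + 2) - h (x + 1)"
    and h0: "h 0 = 0"
    and inv: "comparison_invariant V Vh"
  shows "comparison_invariant (vstep lam mul muh R c h V) (vhstep lam mul muh R h Vh)"
proof -
  let ?W = "\<lambda>x. vstep lam mul muh R c h V x 0" and ?Wh = "\<lambda>x. vhstep lam mul muh R h Vh x 0"
  have Vh0: "noninc_concave (\<lambda>x. Vh x 0)" and Vh1: "noninc_concave (\<lambda>x. Vh x 1)"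
    and le0: "\<And>x. fdiff (\<lambda>x. V x 0) x \<le> fdiff (\<lambda>x. Vh x 0) x"
    and le1: "\<And>x. fdiff (\<lambda>x. V x 1) x \<le> fdiff (\<lambda>x. Vh x 1) x"
    using inv by (auto simp: comparison_invariant_def)
  have Wh: "noninc_concave ?Wh"
    using vhstep_noninc_concave[OF lam mul muh h_mono h_convex h0 Vh0 Vh1] .
  have W_le: "fdiff ?W x \<le> fdiff ?Wh x" for x
    using Vh0 le0 le1 by (intro vstep_fdiff_le_vhstep[OF lam mul muh]) (auto simp: noninc_concave_def)
  have Wh1: "noninc_concave (\<lambda>x. vhstep lam mul muh R h Vh x 1)"
    unfolding vhstep_admit using Wh by (rule admit_noninc_concave)
  have W1_le: "fdiff (\<lambda>x. vstep lam mul muh R c h V x 1) x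
      \<le> fdiff (\<lambda>x. vhstep lam mul muh R h Vh x 1) x" for x
    unfolding vstep_admit vhstep_admit using W_le by (rule admit_fdiff_mono)
  show ?thesis
    using Wh W_le Wh1 W1_le by (simp add: comparison_invariant_def)
qed

lemma value_iteration_comparison:
  assumes "lam \<ge> 0" and "mul \<ge> 0" and "mul \<le> muh"
    and "mono h" and "\<And>x. h (x + 1) - h x \<le> h (x + 2) - h (x + 1)" and "h 0 = 0"
  shows "comparison_invariant (vfun lam mul muh R c h n) (vhfun lam mul muh R h n)"
proof (induction n)
  case 0
  show ?case by (simp add: vfun_def vhfun_def comparison_invariant_def noninc_concave_def fdiff_def)
next
  case (Suc n)
  then show ?case
    using step_preserves_comparison_invariant[OF assms] by (simp add: vfun_def vhfun_def)
qed

text \<open>A pointwise larger function has a smaller sublevel set, hence a smaller threshold.\<close>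
lemma thresh_antitone:
  assumes "\<And>k. g k \<le> f k"
  shows "thresh f \<theta> \<le> thresh g \<theta>"
proof -
  let ?F = "{k. f k \<le> \<theta>}" and ?G = "{k. g k \<le> \<theta>}"
  have sub: "?F \<subseteq> ?G" using assms by (auto intro: order_trans)
  show ?thesis
  proof (cases "?G = {}")
    case True
    then show ?thesis using sub by (simp add: thresh_def)
  next
    case False
    then obtain k0 where "k0 \<in> ?G" by blast
    then have "ereal (real k0) \<le> (SUP k\<in>?G. ereal (real k))" by (rule SUP_upper)
    then have G_nonneg: "-1 \<le> (SUP k\<in>?G. ereal (real k))"
      by (rule order_trans[rotated]) (simp add: one_ereal_def)
    have "(SUP k\<in>?F. ereal (real k)) \<le> (SUP k\<in>?G. ereal (real k))"
      using sub by (rule SUP_subset_mono) simp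
    then show ?thesis using False G_nonneg by (auto simp: thresh_def)
  qed
qed

theorem theorem3:
  fixes lam mul muh R c :: real and h :: "nat \<Rightarrow> real"
  assumes "lam > 0" and "0 < mul" and "mul < muh" and "R \<ge> 0" and "c > 0"
    and "mono h" and "\<And>x. h (x + 1) - h x \<le> h (x + 2) - h (x + 1)" and "h 0 = 0"
    and "lam + muh < 1"
  shows "(\<forall>n i. i \<in> {0, 1} \<longrightarrow>
            mono (\<lambda>x. vfun lam mul muh R c h n x i - vhfun lam mul muh R h n x i))
       \<and> (\<forall>n \<ge> 1.
            thresh (\<lambda>x. vhfun lam mul muh R h n x 0 - vhfun lam mul muh R h n (x + 1) 0) R
          \<le> thresh (\<lambda>x. vfun lam mul muh R c h n x 0 - vfun lam mul muh R c h n (x + 1) 0) R)"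
proof -
  have diff_le: "fdiff (\<lambda>x. vfun lam mul muh R c h n x i) x
      \<le> fdiff (\<lambda>x. vhfun lam mul muh R h n x i) x" if "i \<in> {0, 1}" for n i x
    using value_iteration_comparison[of lam mul muh h R c n] assms that
    by (auto simp: comparison_invariant_def)
  have part1: "mono (\<lambda>x. vfun lam mul muh R c h n x i - vhfun lam mul muh R h n x i)"
    if "i \<in> {0, 1}" for n i
    unfolding mono_iff_le_Suc
  proof
    fix x
    show "vfun lam mul muh R c h n x i - vhfun lam mul muh R h n x i
        \<le> vfun lam mul muh R c h n (Suc x) i - vhfun lam mul muh R h n (Suc x) i"
      using diff_le[OF that, of n x] unfolding fdiff_def by linarith
  qed
  have part2: "thresh (\<lambda>x. vhfun lam mul muh R h n x 0 - vhfun lam mul muh R h n (x + 1) 0) R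
      \<le> thresh (\<lambda>x. vfun lam mul muh R c h n x 0 - vfun lam mul muh R c h n (x + 1) 0) R" for n
    using diff_le[of 0 n] by (intro thresh_antitone) (simp add: fdiff_def)
  show ?thesis using part1 part2 by blast
qed

end
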